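(* Let $\kappa_*>0$, $0<L<U<\infty$, $0<\beta<1$, and let $H^*$ be a probability measure on $[L,U]$. Suppose $(X_i,\theta_i)$, $i=1,\dots,n$, are i.i.d. from $X_i\mid\theta_i\sim\mathrm{Poi}(\theta_i)$, $\theta_i\mid\lambda_i\sim\mathrm{Gamma}(\kappa_*,\lambda_i)$ (shape-rate), $\lambda_i\sim H^*$, and let $\widehat H_n\in\arg\max_{H\in\mathcal P([L,U])}\sum_{i=1}^n\log f_H(X_i)$. Define $$\hat k_n=\sup\Big\{k\ge0:\sum_{x=0}^\infty\int_0^\infty\mathbf 1\big(\pi_{\widehat H_n}(\theta\mid x)\ge k\big)p_\theta(x)g_{\widehat H_n}(\theta)\,d\theta\ge1-\beta\Big\},\qquad \hat{\mathcal I}_n(x)=\{\theta\ge0:\pi_{\widehat H_n}(\theta\mid x)\ge\hat k_n\}.$$ Let $(X,\theta)$ be independent of $\{(X_i,\theta_i)\}_{i=1}^n$ with the same joint law. Let $\alpha_*\in(0,1/2)$ be the exponent (depending only on $(L,U)$) for which $\mathbb E_{H^*}[\mathrm{TV}(g_{\widehat H_n},g_{H^*})]\le C n^{-\alpha_*}(\log n)^{(1-\kappa_* )_++\alpha_*}$ holds with $C$ depending only on $(\kappa_*,L,U)$. Then $$\mathbb E_{H^*}\Big[\big|\mathbb P_{H^*}(\theta\in\hat{\mathcal I}_n(X)\mid\widehat H_n)-(1-\beta)\big|\Big]\le C'\,n^{-\alpha_*}(\log n)^{(1-\kappa_* )_++\alpha_*},$$ with $C'>0$ depending only on $(\kappa_*,L,U)$,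 where $\mathbb P_{H^*}(\theta\in\hat{\mathcal I}_n(X)\mid\widehat H_n)=\sum_{x=0}^\infty\int_0^\infty\mathbf 1(\theta\in\hat{\mathcal I}_n(x))p_\theta(x)g_{H^*}(\theta)\,d\theta$.
   Context: For $H$ a probability measure on $(0,\infty)$: $f_H(x)=\int\frac{\Gamma(x+\kappa_* )}{x!\,\Gamma(\kappa_* )}\left(\frac{1}{\lambda+1}\right)^x\left(\frac{\lambda}{\lambda+1}\right)^{\kappa_*}dH(\lambda)$, $g_H(\theta)=\int\frac{\lambda^{\kappa_*}}{\Gamma(\kappa_* )}\theta^{\kappa_*-1}e^{-\lambda\theta}dH(\lambda)$, $p_\theta(x)=e^{-\theta}\theta^x/x!$, and $\pi_H(\theta\mid x)=p_\theta(x)g_H(\theta)/f_H(x)$. $\mathrm{TV}(g,g')=\frac12\int_0^\infty|g-g'|$; $(t)_+=\max(t,0)$; $\mathcal P(A)$ is the set of probability measures on $A$. *)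

theory Defs
  imports "HOL-Probability.Probability"
begin

definition probs_on :: "real \<Rightarrow> real \<Rightarrow> real measure set" where
  "probs_on L U = {H. prob_space H \<and> sets H = sets borel \<and> emeasure H {L..U} = 1}"

text \<open>Negative-binomial mixture marginal f_H(x).\<close>
definition fH :: "real \<Rightarrow> real measure \<Rightarrow> nat \<Rightarrow> real" where
  "fH \<kappa> H x = (\<integral>lam. Gamma (real x + \<kappa>) / (fact x * Gamma \<kappa>)
        * (1 / (lam + 1)) ^ x * (lam / (lam + 1)) powr \<kappa> \<partial>H)"

definition gH :: "real \<Rightarrow> real measure \<Rightarrow> real \<Rightarrow> real" where
  "gH \<kappa> H \<theta> = (\<integral>lam. lam powr \<kappa> / Gamma \<kappa> * \<theta> powr (\<kappa> - 1) * exp (- lam * \<theta>) \<partial>H)"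

definition pois :: "real \<Rightarrow> nat \<Rightarrow> real" where
  "pois \<theta> x = exp (- \<theta>) * \<theta> ^ x / fact x"

definition post :: "real \<Rightarrow> real measure \<Rightarrow> real \<Rightarrow> nat \<Rightarrow> real" where
  "post \<kappa> H \<theta> x = pois \<theta> x * gH \<kappa> H \<theta> / fH \<kappa> H x"

definition TV :: "(real \<Rightarrow> real) \<Rightarrow> (real \<Rightarrow> real) \<Rightarrow> real" where
  "TV g g' = 1/2 * (LINT \<theta>:{0..}|lborel. \<bar>g \<theta> - g' \<theta>\<bar>)"

definition pos_part :: "real \<Rightarrow> real" where
  "pos_part t = max t 0"

definition is_npmle :: "real \<Rightarrow> real \<Rightarrow> real \<Rightarrow> (nat list \<Rightarrow> real measure) \<Rightarrow> bool" where
  "is_npmle \<kappa> L U Hhat \<longleftrightarrow> (\<forall>xs. Hhat xs \<in> probs_on L U \<and>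
      (\<forall>H\<in>probs_on L U. (\<Sum>x\<leftarrow>xs. ln (fH \<kappa> H x)) \<le> (\<Sum>x\<leftarrow>xs. ln (fH \<kappa> (Hhat xs) x))))"

text \<open>Expectation over an i.i.d. sample X_1..X_n with marginal pmf f_{H*}
  (the theta_i integrate out; the sample space is countable).\<close>
definition sample_exp :: "real \<Rightarrow> real measure \<Rightarrow> nat \<Rightarrow> (nat list \<Rightarrow> real) \<Rightarrow> real" where
  "sample_exp \<kappa> Hs n F = infsum (\<lambda>xs. (\<Prod>x\<leftarrow>xs. fH \<kappa> Hs x) * F xs) {xs. length xs = n}"

definition hpd_mass :: "real \<Rightarrow> real measure \<Rightarrow> real \<Rightarrow> real" where
  "hpd_mass \<kappa> H k = (\<Sum>x. LINT \<theta>:{0..}|lborel.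
      indicat_real {\<theta>. post \<kappa> H \<theta> x \<ge> k} \<theta> * pois \<theta> x * gH \<kappa> H \<theta>)"

definition khat :: "real \<Rightarrow> real measure \<Rightarrow> real \<Rightarrow> real" where
  "khat \<kappa> H \<beta> = Sup {k. k \<ge> 0 \<and> hpd_mass \<kappa> H k \<ge> 1 - \<beta>}"

definition Ihat :: "real \<Rightarrow> real measure \<Rightarrow> real \<Rightarrow> nat \<Rightarrow> real set" where
  "Ihat \<kappa> H \<beta> x = {\<theta>. \<theta> \<ge> 0 \<and> post \<kappa> H \<theta> x \<ge> khat \<kappa> H \<beta>}"

definition coverage :: "real \<Rightarrow> real measure \<Rightarrow> real measure \<Rightarrow> real \<Rightarrow> real" where
  "coverage \<kappa> Hs H \<beta> = (\<Sum>x. LINT \<theta>:{0..}|lborel.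
      indicat_real (Ihat \<kappa> H \<beta> x) \<theta> * pois \<theta> x * gH \<kappa> Hs \<theta>)"

definition rate :: "real \<Rightarrow> real \<Rightarrow> nat \<Rightarrow> real" where
  "rate \<kappa> \<alpha> n = real n powr (- \<alpha>) * ln (real n) powr (pos_part (1 - \<kappa>) + \<alpha>)"

end

theory Submission
  imports Defs "HOL-Complex_Analysis.Complex_Analysis" "HOL-Real_Asymp.Real_Asymp"
begin

text \<open>
  Under its own prior \<open>H\<close> the HPD region has coverage exactly \<open>1 - \<beta>\<close>. For fixed \<open>x\<close> the
  posterior density is, up to a constant, \<open>\<theta>^(x+\<kappa>-1) e^-\<theta>\<close> times the Laplace transform of the
  compactly supported measure \<open>\<lambda>^\<kappa> dH\<close>; this extends holomorphically to the right half plane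
  and is not constant, so its level sets are countable. Hence the posterior has no atoms under
  the joint law of \<open>(X, \<theta>)\<close>, the HPD mass \<open>k \<mapsto> P(\<pi>_H(\<theta>|X) \<ge> k)\<close> is continuous, and at the
  threshold \<open>khat\<close> (a supremum) the HPD mass is exactly \<open>1 - \<beta>\<close>.

  Replacing the prior by \<open>H*\<close> changes the joint law of every region by at most
  \<open>\<integral>|g_H - g_H*| = 2 TV(g_H, g_H*)\<close>, and \<open>TV \<le> 1\<close>; averaging over the sample turns the
  assumed TV rate into the coverage rate with \<open>C' = 2 C\<close>.
\<close>

lemma nn_integral_powr_exp_scaled:
  fixes a s c :: real
  assumes s: "s > 0" and c: "c > 0" and a: "a \<ge> 0"
  shows "(\<integral>\<^sup>+ t. ennreal (a * (indicator {0..} t * t powr (s - 1) * exp (- c * t))) \<partial>lborel)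
         = ennreal (a * Gamma s / c powr s)"
proof -
  define I where "I = (\<integral>\<^sup>+ t. ennreal (indicator {0..} t * t powr (s - 1) * exp (- c * t)) \<partial>lborel)"
  have rescale: "indicator {0..} (c * t) * (c * t) powr (s - 1) / exp (c * t)
      = c powr (s - 1) * (indicator {0..} t * t powr (s - 1) * exp (- c * t))" for t
    using c by (cases "t \<ge> 0") (auto simp: powr_mult zero_le_mult_iff exp_minus field_simps)
  have "ennreal (Gamma s) = (\<integral>\<^sup>+ t. ennreal (indicator {0..} t * t powr (s - 1) / exp t) \<partial>lborel)"
    using Gamma_conv_nn_integral_real[OF s] by simp
  also have "\<dots> = ennreal c * (\<integral>\<^sup>+ t. ennreal (c powr (s - 1)) * ennreal (indicator {0..} t * t powr (s - 1) * exp (- c * t)) \<partial>lborel)"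
    using nn_integral_real_affine[of "\<lambda>t. ennreal (indicator {0..} t * t powr (s - 1) / exp t)" c 0] c
    by (simp add: rescale ennreal_mult)
  also have "\<dots> = ennreal (c * c powr (s - 1)) * I"
    unfolding I_def using c by (simp add: nn_integral_cmult ennreal_mult mult.assoc)
  also have "c * c powr (s - 1) = c powr s"
    using c by (simp add: powr_diff)
  finally have I: "I = ennreal (Gamma s / c powr s)"
    using c Gamma_real_pos[OF s]
    by (metis divide_ennreal ennreal_mult_divide_eq ennreal_eq_0_iff ennreal_neq_top
        less_le_not_le mult.commute powr_gt_zero)
  have "(\<integral>\<^sup>+ t. ennreal (a * (indicator {0..} t * t powr (s - 1) * exp (- c * t))) \<partial>lborel) = ennreal a * I"
    unfolding I_def using a by (simp add: ennreal_mult nn_integral_cmult)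
  also have "\<dots> = ennreal (a * (Gamma s / c powr s))"
    unfolding I using a Gamma_real_pos[OF s] c by (intro ennreal_mult[symmetric]) auto
  finally show ?thesis by simp
qed

lemma (in prob_space) integral_pos_AE:
  fixes f :: "'a \<Rightarrow> real"
  assumes f: "integrable M f" and pos: "AE x in M. 0 < f x"
  shows "integral\<^sup>L M f > 0"
proof -
  have nonneg: "AE x in M. 0 \<le> f x" using pos by eventually_elim auto
  have "integral\<^sup>L M f \<noteq> 0"
  proof
    assume "integral\<^sup>L M f = 0"
    then have "AE x in M. f x = 0" using integral_nonneg_eq_0_iff_AE[OF f nonneg] by simp
    with pos have "AE x in M. False" by eventually_elim auto
    then show False by simp
  qed
  with integral_nonneg_AE[OF nonneg] show ?thesis by simp
qed

lemma
  fixes F :: "nat \<Rightarrow> 'a \<Rightarrow> real"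
  assumes F_meas: "\<And>x. F x \<in> borel_measurable M" and F_nonneg: "\<And>x t. 0 \<le> F x t"
    and F_sums: "\<And>t. (\<lambda>x. F x t) sums S t" and S_int: "integrable M S"
  shows integrable_nonneg_series_term: "integrable M (F x)"
    and sums_integral_nonneg_series: "(\<lambda>x. \<integral>t. F x t \<partial>M) sums (\<integral>t. S t \<partial>M)"
proof -
  have S_nonneg: "0 \<le> S t" for t
    using F_sums[of t] F_nonneg by (metis sums_unique suminf_nonneg sums_summable)
  have F_le_S: "F x t \<le> S t" for x t
    using sum_le_suminf[of "\<lambda>x. F x t" "{x}"] F_sums[of t] F_nonneg by (auto simp: sums_iff)
  show F_int: "integrable M (F x)" for x
    by (rule Bochner_Integration.integrable_bound[OF S_int F_meas]) (use F_le_S F_nonneg S_nonneg in auto)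
  have int_nonneg: "0 \<le> (\<integral>t. F x t \<partial>M)" for x using F_nonneg by simp
  have "(\<Sum>x. ennreal (\<integral>t. F x t \<partial>M)) = (\<Sum>x. (\<integral>\<^sup>+t. ennreal (F x t) \<partial>M))"
    by (rule suminf_cong) (rule nn_integral_eq_integral[OF F_int, symmetric], simp add: F_nonneg)
  also have "\<dots> = (\<integral>\<^sup>+t. (\<Sum>x. ennreal (F x t)) \<partial>M)"
    by (rule nn_integral_suminf[symmetric]) (use F_meas in simp)
  also have "\<dots> = (\<integral>\<^sup>+t. ennreal (S t) \<partial>M)"
    by (rule nn_integral_cong) (use F_sums F_nonneg in \<open>auto simp: suminf_ennreal2 sums_iff\<close>)
  also have "\<dots> = ennreal (\<integral>t. S t \<partial>M)"
    by (rule nn_integral_eq_integral[OF S_int]) (simp add: S_nonneg)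
  finally have sum_eq: "(\<Sum>x. ennreal (\<integral>t. F x t \<partial>M)) = ennreal (\<integral>t. S t \<partial>M)" .
  have summable: "summable (\<lambda>x. \<integral>t. F x t \<partial>M)"
    by (rule summable_suminf_not_top) (use int_nonneg sum_eq in auto)
  have "ennreal (\<Sum>x. \<integral>t. F x t \<partial>M) = ennreal (\<integral>t. S t \<partial>M)"
    using sum_eq suminf_ennreal2[OF int_nonneg summable] by simp
  then have "(\<Sum>x. \<integral>t. F x t \<partial>M) = (\<integral>t. S t \<partial>M)"
    using int_nonneg S_nonneg by (subst (asm) ennreal_inj) (auto intro: suminf_nonneg summable)
  then show "(\<lambda>x. \<integral>t. F x t \<partial>M) sums (\<integral>t. S t \<partial>M)"
    using summable by (simp add: sums_iff)
qed

lemma pois_nonneg: "\<theta> \<ge> 0 \<Longrightarrow> pois \<theta> x \<ge> 0"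
  by (simp add: pois_def)

lemma borel_measurable_pois[measurable]: "(\<lambda>\<theta>. pois \<theta> x) \<in> borel_measurable borel"
  unfolding pois_def by measurable

lemma pois_sums: "\<theta> \<ge> 0 \<Longrightarrow> (\<lambda>x. pois \<theta> x) sums 1"
  using sums_mult[OF exp_converges[of \<theta>], of "exp (- \<theta>)"]
  by (simp add: pois_def exp_minus divide_inverse mult_ac)

lemma
  fixes \<delta> :: "real \<Rightarrow> real"
  assumes \<delta>_int: "integrable lborel \<delta>" and \<delta>_nonneg: "\<And>\<theta>. 0 \<le> \<delta> \<theta>"
    and \<delta>_neg: "\<And>\<theta>. \<theta> < 0 \<Longrightarrow> \<delta> \<theta> = 0"
  shows integrable_pois_times: "integrable lborel (\<lambda>\<theta>. pois \<theta> x * \<delta> \<theta>)"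
    and sums_integral_pois_times: "(\<lambda>x. \<integral>\<theta>. pois \<theta> x * \<delta> \<theta> \<partial>lborel) sums (\<integral>\<theta>. \<delta> \<theta> \<partial>lborel)"
proof -
  have sums: "(\<lambda>x. pois \<theta> x * \<delta> \<theta>) sums \<delta> \<theta>" for \<theta>
  proof (cases "0 \<le> \<theta>")
    case True
    then show ?thesis using sums_mult2[OF pois_sums[OF True], of "\<delta> \<theta>"] by simp
  qed (simp add: \<delta>_neg)
  have nonneg: "0 \<le> pois \<theta> x * \<delta> \<theta>" for x \<theta>
    using \<delta>_nonneg[of \<theta>] by (cases "0 \<le> \<theta>") (auto simp: \<delta>_neg pois_nonneg)
  have meas: "(\<lambda>\<theta>. pois \<theta> x * \<delta> \<theta>) \<in> borel_measurable lborel" for x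
    using borel_measurable_integrable[OF \<delta>_int] by measurable
  show "integrable lborel (\<lambda>\<theta>. pois \<theta> x * \<delta> \<theta>)"
    by (rule integrable_nonneg_series_term[OF meas nonneg sums \<delta>_int])
  show "(\<lambda>x. \<integral>\<theta>. pois \<theta> x * \<delta> \<theta> \<partial>lborel) sums (\<integral>\<theta>. \<delta> \<theta> \<partial>lborel)"
    by (rule sums_integral_nonneg_series[OF meas nonneg sums \<delta>_int])
qed

definition gamma_pdf :: "real \<Rightarrow> real \<Rightarrow> real \<Rightarrow> real" where
  "gamma_pdf \<kappa> lam \<theta> = lam powr \<kappa> / Gamma \<kappa> * \<theta> powr (\<kappa> - 1) * exp (- lam * \<theta>)"

definition negbin_pmf :: "real \<Rightarrow> real \<Rightarrow> nat \<Rightarrow> real" where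
  "negbin_pmf \<kappa> lam x = Gamma (real x + \<kappa>) / (fact x * Gamma \<kappa>)
        * (1 / (lam + 1)) ^ x * (lam / (lam + 1)) powr \<kappa>"

lemma gH_eq_integral_gamma_pdf: "gH \<kappa> H \<theta> = (\<integral>lam. gamma_pdf \<kappa> lam \<theta> \<partial>H)"
  unfolding gH_def gamma_pdf_def ..

lemma fH_eq_integral_negbin_pmf: "fH \<kappa> H x = (\<integral>lam. negbin_pmf \<kappa> lam x \<partial>H)"
  unfolding fH_def negbin_pmf_def ..

lemma gamma_pdf_nonneg: "\<kappa> > 0 \<Longrightarrow> gamma_pdf \<kappa> lam \<theta> \<ge> 0"
  unfolding gamma_pdf_def by simp

lemma nn_integral_gamma_pdf:
  assumes "\<kappa> > 0" "lam > 0"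
  shows "(\<integral>\<^sup>+\<theta>. ennreal (indicator {0..} \<theta> * gamma_pdf \<kappa> lam \<theta>) \<partial>lborel) = 1"
proof -
  have "(\<integral>\<^sup>+\<theta>. ennreal (indicator {0..} \<theta> * gamma_pdf \<kappa> lam \<theta>) \<partial>lborel)
      = ennreal (lam powr \<kappa> / Gamma \<kappa> * Gamma \<kappa> / lam powr \<kappa>)"
    using nn_integral_powr_exp_scaled[of \<kappa> lam "lam powr \<kappa> / Gamma \<kappa>"] assms
    by (simp add: gamma_pdf_def mult_ac)
  then show ?thesis using assms Gamma_real_pos[OF assms(1)] by simp
qed

lemma nn_integral_pois_gamma_pdf:
  assumes "\<kappa> > 0" "lam > 0"
  shows "(\<integral>\<^sup>+\<theta>. ennreal (indicator {0..} \<theta> * pois \<theta> x * gamma_pdf \<kappa> lam \<theta>) \<partial>lborel)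
       = ennreal (negbin_pmf \<kappa> lam x)"
proof -
  define a where "a = lam powr \<kappa> / (fact x * Gamma \<kappa>)"
  have integrand: "indicator {0..} \<theta> * pois \<theta> x * gamma_pdf \<kappa> lam \<theta>
      = a * (indicator {0..} \<theta> * \<theta> powr (real x + \<kappa> - 1) * exp (- (lam + 1) * \<theta>))" for \<theta>
  proof (cases "\<theta> > 0")
    case True
    have "\<theta> ^ x * \<theta> powr (\<kappa> - 1) = \<theta> powr (real x + \<kappa> - 1)"
      using True by (simp add: powr_realpow[symmetric] powr_add[symmetric] add_diff_eq)
    moreover have "exp (- \<theta>) * exp (- lam * \<theta>) = exp (- (lam + 1) * \<theta>)"
      by (simp add: exp_add[symmetric] algebra_simps)
    moreover have "indicator {0..} \<theta> * pois \<theta> x * gamma_pdf \<kappa> lam \<theta>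
        = a * ((\<theta> ^ x * \<theta> powr (\<kappa> - 1)) * (exp (- \<theta>) * exp (- lam * \<theta>)))"
      using True by (simp add: pois_def gamma_pdf_def a_def)
    ultimately show ?thesis
      using True by simp
  qed (cases "\<theta> = 0", auto simp: gamma_pdf_def)
  have "(lam + 1) powr (real x + \<kappa>) = (lam + 1) ^ x * (lam + 1) powr \<kappa>"
    using assms by (simp add: powr_add powr_realpow)
  then have "a * Gamma (real x + \<kappa>) / (lam + 1) powr (real x + \<kappa>) = negbin_pmf \<kappa> lam x"
    using assms by (simp add: negbin_pmf_def a_def powr_divide power_one_over field_simps)
  then show ?thesis
    unfolding integrand using nn_integral_powr_exp_scaled[of "real x + \<kappa>" "lam + 1" a] assms
    by (simp add: a_def)
qed

lemma negbin_pmf_pos: "\<kappa> > 0 \<Longrightarrow> lam > 0 \<Longrightarrow> negbin_pmf \<kappa> lam x > 0"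
  unfolding negbin_pmf_def by (simp add: Gamma_real_pos)

lemma negbin_pmf_le:
  assumes "\<kappa> > 0" "lam > 0"
  shows "negbin_pmf \<kappa> lam x \<le> Gamma (real x + \<kappa>) / (fact x * Gamma \<kappa>)"
proof -
  have "(1 / (lam + 1)) ^ x * (lam / (lam + 1)) powr \<kappa> \<le> 1 * 1 powr \<kappa>"
    using assms by (intro mult_mono power_le_one powr_mono2) auto
  then have "Gamma (real x + \<kappa>) * ((1 / (lam + 1)) ^ x * (lam / (lam + 1)) powr \<kappa>) \<le> Gamma (real x + \<kappa>)"
    using assms by (intro mult_left_le) (auto intro: less_imp_le Gamma_real_pos)
  then show ?thesis
    unfolding negbin_pmf_def using Gamma_real_pos[OF assms(1)]
    by (simp add: mult.assoc) (rule divide_right_mono, auto)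
qed

lemma fsigma_halfspace_Re_gt: "fsigma {z::complex. 0 < Re z}"
proof -
  have "{z::complex. 0 < Re z} = (\<Union>n. {z. 1 / Suc n \<le> Re z})"
  proof (intro equalityI subsetI)
    fix z :: complex assume "z \<in> {z. 0 < Re z}"
    then obtain n where "inverse (real (Suc n)) < Re z" using reals_Archimedean by auto
    then have "1 / Suc n \<le> Re z" by (simp add: inverse_eq_divide)
    then show "z \<in> (\<Union>n. {z. 1 / Suc n \<le> Re z})" by blast
  next
    fix z :: complex assume "z \<in> (\<Union>n. {z. 1 / Suc n \<le> Re z})"
    then obtain n where "1 / Suc n \<le> Re z" by blast
    then show "z \<in> {z. 0 < Re z}" by (simp add: less_le_trans[OF _ \<open>1 / Suc n \<le> Re z\<close>])
  qed
  then show ?thesis by (simp add: fsigma.intros closed_halfspace_Re_ge)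
qed

lemma countable_level_set_of_holomorphic_extension:
  fixes h :: "real \<Rightarrow> real" and G :: "complex \<Rightarrow> complex"
  assumes holo: "G holomorphic_on {z. 0 < Re z}"
    and extends: "\<And>t. 0 < t \<Longrightarrow> G (of_real t) = of_real (h t)"
    and nonconst: "0 < t0" "0 < t1" "h t0 \<noteq> h t1"
  shows "countable {t. 0 < t \<and> h t = c}"
proof -
  let ?S = "{z::complex. 0 < Re z}"
  have "\<not> (\<lambda>z. G z - of_real c) constant_on ?S"
  proof
    assume "(\<lambda>z. G z - of_real c) constant_on ?S"
    then obtain y where "\<forall>z\<in>?S. G z - of_real c = y" by (auto simp: constant_on_def)
    then have "G (of_real t0) - of_real c = G (of_real t1) - of_real c" using nonconst by simp
    with nonconst extends show False by simp
  qed
  moreover have "(\<lambda>z. G z - of_real c) holomorphic_on ?S"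
    using holo by (intro holomorphic_intros)
  ultimately have "countable {z \<in> ?S. G z - of_real c = 0}"
    by (intro holomorphic_countable_zeros open_halfspace_Re_gt fsigma_halfspace_Re_gt
        convex_connected[OF convex_halfspace_Re_gt])
  moreover have "{t. 0 < t \<and> h t = c} \<subseteq> Re ` {z \<in> ?S. G z - of_real c = 0}"
  proof
    fix t assume "t \<in> {t. 0 < t \<and> h t = c}"
    then have "of_real t \<in> {z \<in> ?S. G z - of_real c = 0}" using extends[of t] by simp
    then show "t \<in> Re ` {z \<in> ?S. G z - of_real c = 0}" by (rule rev_image_eqI) simp
  qed
  ultimately show ?thesis by (rule countable_subset[OF _ countable_image, rotated])
qed

lemma Sup_superlevel_set_eq:
  fixes \<phi> :: "real \<Rightarrow> real"
  assumes cont: "\<And>k. isCont \<phi> k" and at_0: "t \<le> \<phi> 0" and at_top: "eventually (\<lambda>k. \<phi> k < t) at_top"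
  shows "\<phi> (Sup {k. 0 \<le> k \<and> t \<le> \<phi> k}) = t"
proof -
  define S where "S = {k. 0 \<le> k \<and> t \<le> \<phi> k}"
  define K where "K = Sup S"
  have "0 \<in> S" using at_0 by (simp add: S_def)
  obtain M where M: "\<And>k. M \<le> k \<Longrightarrow> \<phi> k < t" using at_top by (auto simp: eventually_at_top_linorder)
  have bdd: "bdd_above S"
  proof (rule bdd_aboveI)
    fix k assume "k \<in> S"
    show "k \<le> M"
    proof (rule ccontr)
      assume "\<not> k \<le> M"
      then have "\<phi> k < t" by (intro M) simp
      with \<open>k \<in> S\<close> show False by (simp add: S_def)
    qed
  qed
  have "closed {k. t \<le> \<phi> k}"
    using cont by (intro closed_Collect_le continuous_on_const continuous_at_imp_continuous_on) auto
  then have "closed S"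
    unfolding S_def Collect_conj_eq using closed_atLeast[of 0] by (intro closed_Int) (simp_all add: atLeast_def)
  then have "K \<in> S" unfolding K_def using \<open>0 \<in> S\<close> bdd by (intro closed_contains_Sup) auto
  then have lower: "t \<le> \<phi> K" by (simp add: S_def)
  have "\<phi> (K + 1 / Suc n) < t" for n
  proof -
    have "K + 1 / Suc n \<notin> S"
      using cSup_upper[OF _ bdd, of "K + 1 / Suc n"] by (auto simp: K_def)
    then show ?thesis using \<open>K \<in> S\<close> by (simp add: S_def add_nonneg_nonneg)
  qed
  moreover have "(\<lambda>n. \<phi> (K + 1 / Suc n)) \<longlonglongrightarrow> \<phi> K"
    using isCont_tendsto_compose[OF cont tendsto_add[OF tendsto_const LIMSEQ_inverse_real_of_nat]]
    by (simp add: inverse_eq_divide)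
  ultimately have "\<phi> K \<le> t" by (intro LIMSEQ_le_const2) (auto simp: less_imp_le)
  with lower show ?thesis by (simp add: K_def S_def)
qed

lemma sum_prod_list_lists_length:
  fixes f :: "nat \<Rightarrow> real"
  assumes "finite A"
  shows "(\<Sum>xs\<in>{xs. set xs \<subseteq> A \<and> length xs = n}. prod_list (map f xs)) = (\<Sum>x\<in>A. f x) ^ n"
proof (induction n)
  case 0
  have "{xs. set xs \<subseteq> A \<and> length xs = 0} = {[]}" by auto
  then show ?case by simp
next
  case (Suc n)
  let ?S = "{xs. set xs \<subseteq> A \<and> length xs = n}"
  have "(\<Sum>xs\<in>{xs. set xs \<subseteq> A \<and> length xs = Suc n}. prod_list (map f xs))
      = (\<Sum>p\<in>?S \<times> A. prod_list (map f ((\<lambda>(xs, n). n # xs) p)))"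
    unfolding lists_length_Suc_eq by (rule sum.reindex[unfolded comp_def]) (rule inj_split_Cons)
  also have "\<dots> = (\<Sum>xs\<in>?S. \<Sum>x\<in>A. f x * prod_list (map f xs))"
    by (subst sum.cartesian_product) (auto intro!: sum.cong)
  also have "\<dots> = (\<Sum>xs\<in>?S. prod_list (map f xs)) * (\<Sum>x\<in>A. f x)"
    by (simp add: sum_distrib_right sum_distrib_left mult_ac)
  finally show ?case using Suc by simp
qed

lemma summable_on_prod_list_lists_length:
  fixes f :: "nat \<Rightarrow> real"
  assumes f_nonneg: "\<And>x. 0 \<le> f x" and f_summable: "summable f"
  shows "(\<lambda>xs. prod_list (map f xs)) summable_on {xs. length xs = n}"
proof (rule nonneg_bdd_above_summable_on)
  show "0 \<le> prod_list (map f xs)" for xs by (induction xs) (auto simp: f_nonneg)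
  show "bdd_above (sum (\<lambda>xs. prod_list (map f xs)) ` {F. F \<subseteq> {xs. length xs = n} \<and> finite F})"
  proof (rule bdd_aboveI2)
    fix F :: "nat list set" assume F: "F \<in> {F. F \<subseteq> {xs. length xs = n} \<and> finite F}"
    define K where "K = Suc (Max (insert 0 (\<Union>xs\<in>F. set xs)))"
    have "F \<subseteq> {xs. set xs \<subseteq> {..<K} \<and> length xs = n}"
      using F by (auto simp: K_def less_Suc_eq_le intro!: Max_ge)
    then have "sum (\<lambda>xs. prod_list (map f xs)) F
        \<le> (\<Sum>xs\<in>{xs. set xs \<subseteq> {..<K} \<and> length xs = n}. prod_list (map f xs))"
      using \<open>\<And>xs. 0 \<le> prod_list (map f xs)\<close> by (intro sum_mono2 finite_lists_length_eq) auto
    also have "\<dots> = (\<Sum>x<K. f x) ^ n" by (simp add: sum_prod_list_lists_length)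
    also have "\<dots> \<le> (suminf f) ^ n"
      using f_nonneg by (intro power_mono sum_le_suminf f_summable sum_nonneg) auto
    finally show "sum (\<lambda>xs. prod_list (map f xs)) F \<le> (suminf f) ^ n" .
  qed
qed

lemma infsum_prod_list_weighted_le:
  fixes f :: "nat \<Rightarrow> real" and F G :: "nat list \<Rightarrow> real"
  assumes f_nonneg: "\<And>x. 0 \<le> f x" and f_summable: "summable f" and "0 \<le> c"
    and F_nonneg: "\<And>xs. 0 \<le> F xs" and F_le: "\<And>xs. F xs \<le> c * G xs" and G_le: "\<And>xs. G xs \<le> B"
  shows "infsum (\<lambda>xs. prod_list (map f xs) * F xs) {xs. length xs = n}
       \<le> c * infsum (\<lambda>xs. prod_list (map f xs) * G xs) {xs. length xs = n}"
proof -
  let ?P = "\<lambda>xs. prod_list (map f xs)" and ?A = "{xs. length xs = n}"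
  have P_nonneg: "0 \<le> ?P xs" for xs by (induction xs) (auto simp: f_nonneg)
  have bound_summable: "(\<lambda>xs. c * B * ?P xs) summable_on ?A"
    by (intro summable_on_cmult_right summable_on_prod_list_lists_length f_nonneg f_summable)
  have cG_le: "c * G xs \<le> c * B" for xs using G_le \<open>0 \<le> c\<close> by (rule mult_left_mono)
  have cG_nonneg: "0 \<le> c * G xs" for xs using F_nonneg F_le by (rule order_trans)
  have F_le_B: "?P xs * F xs \<le> c * B * ?P xs" and cG_le_B: "?P xs * (c * G xs) \<le> c * B * ?P xs" for xs
    using mult_left_mono[OF order_trans[OF F_le cG_le] P_nonneg] mult_left_mono[OF cG_le P_nonneg]
    by (simp_all add: mult.commute)
  have "infsum (\<lambda>xs. ?P xs * F xs) ?A \<le> infsum (\<lambda>xs. ?P xs * (c * G xs)) ?A"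
  proof (rule infsum_mono)
    show "(\<lambda>xs. ?P xs * F xs) summable_on ?A"
      by (rule summable_on_comparison_test[OF bound_summable F_le_B]) (simp add: P_nonneg F_nonneg)
    show "(\<lambda>xs. ?P xs * (c * G xs)) summable_on ?A"
      by (rule summable_on_comparison_test[OF bound_summable cG_le_B]) (simp add: P_nonneg cG_nonneg)
  qed (use P_nonneg F_le in \<open>auto intro: mult_left_mono\<close>)
  also have "\<dots> = c * infsum (\<lambda>xs. ?P xs * G xs) ?A"
    by (simp add: mult.left_commute[of _ c] infsum_cmult_right')
  finally show ?thesis .
qed

definition joint_pdf :: "real \<Rightarrow> real measure \<Rightarrow> nat \<Rightarrow> real \<Rightarrow> real" where
  "joint_pdf \<kappa> H x \<theta> = indicator {0..} \<theta> * pois \<theta> x * gH \<kappa> H \<theta>"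

definition joint_law :: "real \<Rightarrow> real measure \<Rightarrow> (nat \<times> real) measure" where
  "joint_law \<kappa> H = density (count_space UNIV \<Otimes>\<^sub>M lborel) (\<lambda>z. ennreal (joint_pdf \<kappa> H (fst z) (snd z)))"

lemma sets_Collect_count_space_lborel:
  "Measurable.pred (count_space UNIV \<Otimes>\<^sub>M borel) P \<Longrightarrow> {z. P z} \<in> sets (count_space UNIV \<Otimes>\<^sub>M lborel)"
  by (simp add: pred_def space_pair_measure)

locale gamma_mixture =
  fixes \<kappa> L U :: real and H :: "real measure"
  assumes kappa_pos: "0 < \<kappa>" and L_pos: "0 < L" and H_in_probs_on: "H \<in> probs_on L U"
begin

sublocale prob_space H
  using H_in_probs_on by (simp add: probs_on_def)

lemma sets_H: "sets H = sets borel"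
  using H_in_probs_on by (simp add: probs_on_def)

lemma measurable_H: "f \<in> borel_measurable borel \<Longrightarrow> f \<in> borel_measurable H"
  using measurable_cong_sets[OF sets_H refl] by blast

lemma AE_support: "AE lam in H. L \<le> lam \<and> lam \<le> U"
proof -
  have "emeasure H {L..U} = 1" using H_in_probs_on by (simp add: probs_on_def)
  then have "AE lam in H. lam \<in> {L..U}"
    by (intro AE_prob_1) (simp add: measure_def)
  then show ?thesis by simp
qed

lemma AE_pos: "AE lam in H. 0 < lam"
  using AE_support by eventually_elim (use L_pos in auto)

lemma integrable_bounded_on_support:
  fixes f :: "real \<Rightarrow> real"
  assumes "f \<in> borel_measurable borel" and "\<And>lam. L \<le> lam \<Longrightarrow> lam \<le> U \<Longrightarrow> \<bar>f lam\<bar> \<le> B"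
  shows "integrable H f"
  using AE_support assms by (intro integrable_const_bound[of f B] measurable_H) auto

definition laplace :: "real \<Rightarrow> real" where
  "laplace \<theta> = (\<integral>lam. lam powr \<kappa> * exp (- lam * \<theta>) \<partial>H)"

lemma integrable_laplace_integrand: "integrable H (\<lambda>lam. lam powr \<kappa> * exp (- lam * \<theta>))"
proof (rule integrable_bounded_on_support[where B = "U powr \<kappa> * exp (U * \<bar>\<theta>\<bar>)"])
  fix lam assume lam: "L \<le> lam" "lam \<le> U"
  then have "0 < lam" using L_pos by simp
  have "- lam * \<theta> \<le> lam * \<bar>\<theta>\<bar>" using \<open>0 < lam\<close> by (simp add: abs_if)
  also have "\<dots> \<le> U * \<bar>\<theta>\<bar>" using lam by (intro mult_right_mono) auto
  finally have "- lam * \<theta> \<le> U * \<bar>\<theta>\<bar>" .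
  then show "\<bar>lam powr \<kappa> * exp (- lam * \<theta>)\<bar> \<le> U powr \<kappa> * exp (U * \<bar>\<theta>\<bar>)"
    using lam \<open>0 < lam\<close> kappa_pos by (auto intro!: mult_mono powr_mono2)
qed simp

lemma gH_eq_laplace: "gH \<kappa> H \<theta> = \<theta> powr (\<kappa> - 1) / Gamma \<kappa> * laplace \<theta>"
  unfolding gH_def laplace_def by (simp flip: integral_mult_right_zero add: mult_ac)

lemma laplace_pos: "0 < laplace \<theta>"
  unfolding laplace_def using AE_pos
  by (intro integral_pos_AE integrable_laplace_integrand) (auto elim: eventually_mono)

lemma laplace_le:
  assumes "0 \<le> \<theta>"
  shows "laplace \<theta> \<le> U powr \<kappa>"
  unfolding laplace_def using AE_support
proof (intro integral_le_const integrable_laplace_integrand, eventually_elim)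
  case (elim lam)
  then have "lam powr \<kappa> * exp (- lam * \<theta>) \<le> U powr \<kappa> * 1"
    using assms L_pos kappa_pos by (intro mult_mono powr_mono2) auto
  then show ?case by simp
qed

lemma gH_nonneg: "0 \<le> gH \<kappa> H \<theta>"
  unfolding gH_eq_laplace using laplace_pos[of \<theta>] Gamma_real_pos[OF kappa_pos] by simp

lemma borel_measurable_laplace[measurable]: "laplace \<in> borel_measurable borel"
proof -
  have "(\<lambda>(\<theta>, lam). lam powr \<kappa> * exp (- lam * \<theta>)) \<in> borel_measurable (borel \<Otimes>\<^sub>M borel)"
    by measurable
  then have "(\<lambda>(\<theta>, lam). lam powr \<kappa> * exp (- lam * \<theta>)) \<in> borel_measurable (borel \<Otimes>\<^sub>M H)"
    using measurable_cong_sets[OF sets_pair_measure_cong[OF refl sets_H] refl] by blast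
  then show ?thesis
    unfolding laplace_def[abs_def]
    using sigma_finite_measure.borel_measurable_lebesgue_integral[of H "\<lambda>\<theta> lam. lam powr \<kappa> * exp (- lam * \<theta>)" borel]
    by (simp add: sigma_finite_measure_axioms)
qed

lemma borel_measurable_gH[measurable]: "gH \<kappa> H \<in> borel_measurable borel"
  unfolding gH_eq_laplace[abs_def] by measurable

lemma integrable_gamma_pdf: "integrable H (\<lambda>lam. gamma_pdf \<kappa> lam \<theta>)"
  using integrable_mult_right[OF integrable_laplace_integrand, of "\<theta> powr (\<kappa> - 1) / Gamma \<kappa>" \<theta>]
  by (simp add: gamma_pdf_def mult_ac)

lemma nn_integral_times_gH:
  assumes [measurable]: "\<phi> \<in> borel_measurable borel" and \<phi>_nonneg: "\<And>\<theta>. 0 \<le> \<theta> \<Longrightarrow> 0 \<le> \<phi> \<theta>"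
  shows "(\<integral>\<^sup>+\<theta>. ennreal (indicator {0..} \<theta> * \<phi> \<theta> * gH \<kappa> H \<theta>) \<partial>lborel)
       = (\<integral>\<^sup>+lam. (\<integral>\<^sup>+\<theta>. ennreal (indicator {0..} \<theta> * \<phi> \<theta> * gamma_pdf \<kappa> lam \<theta>) \<partial>lborel) \<partial>H)"
proof -
  have pointwise: "ennreal (indicator {0..} \<theta> * \<phi> \<theta> * gH \<kappa> H \<theta>)
      = (\<integral>\<^sup>+lam. ennreal (indicator {0..} \<theta> * \<phi> \<theta> * gamma_pdf \<kappa> lam \<theta>) \<partial>H)" for \<theta>
  proof (cases "0 \<le> \<theta>")
    case True
    have "(\<integral>\<^sup>+lam. ennreal (\<phi> \<theta> * gamma_pdf \<kappa> lam \<theta>) \<partial>H) = ennreal (\<integral>lam. \<phi> \<theta> * gamma_pdf \<kappa> lam \<theta> \<partial>H)"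
      using True \<phi>_nonneg kappa_pos
      by (intro nn_integral_eq_integral integrable_mult_right integrable_gamma_pdf) (simp add: gamma_pdf_nonneg)
    then show ?thesis using True by (simp add: gH_eq_integral_gamma_pdf)
  qed simp
  have "(\<lambda>(lam, \<theta>). gamma_pdf \<kappa> lam \<theta>) \<in> borel_measurable (borel \<Otimes>\<^sub>M lborel)"
    unfolding gamma_pdf_def by measurable
  then have [measurable]: "(\<lambda>(lam, \<theta>). gamma_pdf \<kappa> lam \<theta>) \<in> borel_measurable (H \<Otimes>\<^sub>M lborel)"
    using measurable_cong_sets[OF sets_pair_measure_cong[OF sets_H refl] refl] by blast
  have "pair_sigma_finite H lborel"
    by (intro pair_sigma_finite.intro sigma_finite_measure_axioms lborel.sigma_finite_measure_axioms)
  then show ?thesis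
    unfolding pointwise by (intro pair_sigma_finite.Fubini') measurable
qed

lemma nn_integral_gH: "(\<integral>\<^sup>+\<theta>. ennreal (indicator {0..} \<theta> * gH \<kappa> H \<theta>) \<partial>lborel) = 1"
proof -
  have "(\<integral>\<^sup>+\<theta>. ennreal (indicator {0..} \<theta> * gH \<kappa> H \<theta>) \<partial>lborel)
      = (\<integral>\<^sup>+lam. (\<integral>\<^sup>+\<theta>. ennreal (indicator {0..} \<theta> * gamma_pdf \<kappa> lam \<theta>) \<partial>lborel) \<partial>H)"
    using nn_integral_times_gH[of "\<lambda>_. 1"] by simp
  also have "\<dots> = (\<integral>\<^sup>+lam. 1 \<partial>H)"
    using AE_pos by (intro nn_integral_cong_AE) (auto elim!: eventually_mono simp: nn_integral_gamma_pdf kappa_pos)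
  finally show ?thesis by (simp add: emeasure_space_1)
qed

lemma integrable_gH: "integrable lborel (\<lambda>\<theta>. indicator {0..} \<theta> * gH \<kappa> H \<theta>)"
  and integral_gH: "(\<integral>\<theta>. indicator {0..} \<theta> * gH \<kappa> H \<theta> \<partial>lborel) = 1"
  using nn_integral_gH nn_integral_eq_integrable[of "\<lambda>\<theta>. indicator {0..} \<theta> * gH \<kappa> H \<theta>" lborel 1]
  by (auto simp: gH_nonneg)

lemma integrable_negbin_pmf: "integrable H (\<lambda>lam. negbin_pmf \<kappa> lam x)"
  by (rule integrable_bounded_on_support[where B = "Gamma (real x + \<kappa>) / (fact x * Gamma \<kappa>)"])
     (use L_pos kappa_pos negbin_pmf_le negbin_pmf_pos in \<open>auto simp: negbin_pmf_def[abs_def] abs_of_pos\<close>)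

lemma fH_pos: "0 < fH \<kappa> H x"
  unfolding fH_eq_integral_negbin_pmf using AE_pos
  by (intro integral_pos_AE integrable_negbin_pmf) (auto elim!: eventually_mono simp: negbin_pmf_pos kappa_pos)

lemma joint_pdf_nonneg: "0 \<le> joint_pdf \<kappa> H x \<theta>"
  unfolding joint_pdf_def by (cases "0 \<le> \<theta>") (auto simp: pois_nonneg gH_nonneg)

lemma borel_measurable_joint_pdf[measurable]: "joint_pdf \<kappa> H x \<in> borel_measurable borel"
  unfolding joint_pdf_def[abs_def] by measurable

lemma nn_integral_joint_pdf: "(\<integral>\<^sup>+\<theta>. ennreal (joint_pdf \<kappa> H x \<theta>) \<partial>lborel) = ennreal (fH \<kappa> H x)"
proof -
  have "(\<integral>\<^sup>+\<theta>. ennreal (joint_pdf \<kappa> H x \<theta>) \<partial>lborel) = (\<integral>\<^sup>+lam. ennreal (negbin_pmf \<kappa> lam x) \<partial>H)"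
    unfolding joint_pdf_def using AE_pos
    by (subst nn_integral_times_gH) (auto simp: pois_nonneg nn_integral_pois_gamma_pdf kappa_pos
        intro!: nn_integral_cong_AE elim!: eventually_mono)
  also have "\<dots> = ennreal (fH \<kappa> H x)"
    unfolding fH_eq_integral_negbin_pmf using AE_pos
    by (intro nn_integral_eq_integral integrable_negbin_pmf)
       (auto elim!: eventually_mono simp: kappa_pos negbin_pmf_pos less_imp_le)
  finally show ?thesis .
qed

lemma integrable_joint_pdf: "integrable lborel (joint_pdf \<kappa> H x)"
  and integral_joint_pdf: "(\<integral>\<theta>. joint_pdf \<kappa> H x \<theta> \<partial>lborel) = fH \<kappa> H x"
  using nn_integral_joint_pdf nn_integral_eq_integrable[of "joint_pdf \<kappa> H x" lborel "fH \<kappa> H x"]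
  by (auto simp: joint_pdf_nonneg less_imp_le[OF fH_pos])

lemma fH_sums: "(\<lambda>x. fH \<kappa> H x) sums 1"
proof -
  have "joint_pdf \<kappa> H x \<theta> = pois \<theta> x * (indicator {0..} \<theta> * gH \<kappa> H \<theta>)" for x \<theta>
    by (simp add: joint_pdf_def)
  then show ?thesis
    using sums_integral_pois_times[OF integrable_gH] integral_joint_pdf integral_gH
    by (simp add: gH_nonneg)
qed

lemma integrable_indicator_joint_pdf:
  assumes A[measurable]: "A \<in> sets (count_space UNIV \<Otimes>\<^sub>M lborel)"
  shows "integrable lborel (\<lambda>\<theta>. indicator A (x, \<theta>) * joint_pdf \<kappa> H x \<theta>)"
  by (rule Bochner_Integration.integrable_bound[OF integrable_joint_pdf])
     (auto simp: indicator_def joint_pdf_nonneg)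

lemma joint_law_sums:
  assumes A[measurable]: "A \<in> sets (count_space UNIV \<Otimes>\<^sub>M lborel)"
  shows "(\<lambda>x. \<integral>\<theta>. indicator A (x, \<theta>) * joint_pdf \<kappa> H x \<theta> \<partial>lborel) sums measure (joint_law \<kappa> H) A"
proof -
  define F where "F x \<theta> = indicator A (x, \<theta>) * joint_pdf \<kappa> H x \<theta>" for x \<theta>
  have [measurable]: "(\<lambda>z. joint_pdf \<kappa> H (fst z) (snd z)) \<in> borel_measurable (count_space UNIV \<Otimes>\<^sub>M lborel)"
    using measurable_compose_countable'[where I = UNIV and f = "\<lambda>x z. joint_pdf \<kappa> H x (snd z)"] by auto
  have F_nonneg: "0 \<le> F x \<theta>" for x \<theta> unfolding F_def using joint_pdf_nonneg by simp
  have F_int: "integrable lborel (F x)" for x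
    unfolding F_def using A by (rule integrable_indicator_joint_pdf)
  have "(\<integral>\<theta>. F x \<theta> \<partial>lborel) \<le> fH \<kappa> H x" for x
    unfolding integral_joint_pdf[symmetric]
    by (rule integral_mono[OF F_int integrable_joint_pdf]) (auto simp: F_def indicator_def joint_pdf_nonneg)
  then have summable: "summable (\<lambda>x. \<integral>\<theta>. F x \<theta> \<partial>lborel)"
    using F_nonneg by (intro summable_comparison_test'[OF sums_summable[OF fH_sums]]) auto
  have "emeasure (joint_law \<kappa> H) A = (\<integral>\<^sup>+z. ennreal (F (fst z) (snd z)) \<partial>(count_space UNIV \<Otimes>\<^sub>M lborel))"
    unfolding joint_law_def
    by (subst emeasure_density) (auto simp: F_def intro!: nn_integral_cong split: split_indicator)
  also have "\<dots> = (\<Sum>x. \<integral>\<^sup>+\<theta>. ennreal (F x \<theta>) \<partial>lborel)"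
    by (subst lborel.nn_integral_fst[symmetric]) (auto simp: F_def nn_integral_count_space_nat)
  also have "\<dots> = ennreal (\<Sum>x. \<integral>\<theta>. F x \<theta> \<partial>lborel)"
    using F_int F_nonneg summable
    by (simp add: nn_integral_eq_integral suminf_ennreal2)
  finally have "measure (joint_law \<kappa> H) A = (\<Sum>x. \<integral>\<theta>. F x \<theta> \<partial>lborel)"
    using F_nonneg summable by (simp add: measure_def suminf_nonneg)
  then show ?thesis using summable by (simp add: F_def sums_iff)
qed

lemma sets_joint_law[measurable_cong, simp]:
  "sets (joint_law \<kappa> H) = sets (count_space UNIV \<Otimes>\<^sub>M lborel)"
  by (simp add: joint_law_def)

lemma prob_space_joint_law: "prob_space (joint_law \<kappa> H)"
proof
  have "UNIV \<in> sets (count_space UNIV \<Otimes>\<^sub>M lborel)"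
    using sets.top[of "count_space UNIV \<Otimes>\<^sub>M lborel"] by (simp add: space_pair_measure)
  then have "fH \<kappa> H sums measure (joint_law \<kappa> H) UNIV"
    using joint_law_sums[of UNIV] by (simp add: integral_joint_pdf)
  then have "measure (joint_law \<kappa> H) UNIV = 1"
    using fH_sums sums_unique2 by blast
  then show "emeasure (joint_law \<kappa> H) (space (joint_law \<kappa> H)) = 1"
    by (simp add: joint_law_def space_pair_measure measure_def)
qed

definition moment :: "nat \<Rightarrow> real" where
  "moment n = (\<integral>lam. lam powr \<kappa> * lam ^ n \<partial>H)"

lemma integrable_moment_integrand: "integrable H (\<lambda>lam. lam powr \<kappa> * lam ^ n)"
  by (rule integrable_bounded_on_support[where B = "U powr \<kappa> * U ^ n"])
     (use L_pos kappa_pos in \<open>auto intro!: mult_mono powr_mono2 power_mono\<close>)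

lemma integral_abs_moment_integrand_le: "(\<integral>lam. \<bar>lam powr \<kappa> * lam ^ n\<bar> \<partial>H) \<le> U powr \<kappa> * U ^ n"
  using AE_support
proof (intro integral_le_const integrable_abs integrable_moment_integrand, eventually_elim)
  case (elim lam)
  then show ?case using L_pos kappa_pos by (auto intro!: mult_mono powr_mono2 power_mono)
qed

lemma abs_moment_le: "\<bar>moment n\<bar> \<le> U powr \<kappa> * U ^ n"
  unfolding moment_def using integral_abs_bound integral_abs_moment_integrand_le by (rule order_trans)

lemma laplace_sums: "(\<lambda>n. moment n * (- \<theta>) ^ n / fact n) sums laplace \<theta>"
proof -
  define f where "f n lam = (- \<theta>) ^ n / fact n * (lam powr \<kappa> * lam ^ n)" for n lam
  have f_int: "integrable H (f n)" for n
    unfolding f_def by (intro integrable_mult_right integrable_moment_integrand)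
  have f_sums: "(\<lambda>n. f n lam) sums (lam powr \<kappa> * exp (- lam * \<theta>))" for lam
  proof -
    have "f n lam = lam powr \<kappa> * ((- lam * \<theta>) ^ n /\<^sub>R fact n)" for n
    proof -
      have "(- lam * \<theta>) ^ n = (- \<theta>) ^ n * lam ^ n"
        by (metis mult.commute mult_minus_left power_mult_distrib)
      then show ?thesis by (simp add: f_def divide_inverse mult_ac)
    qed
    then show ?thesis using sums_mult[OF exp_converges[of "- lam * \<theta>"], of "lam powr \<kappa>"] by simp
  qed
  have norm_summable: "summable (\<lambda>n. norm (f n lam))" for lam
  proof -
    have "summable (\<lambda>n. \<bar>lam powr \<kappa>\<bar> * (inverse (fact n) * \<bar>lam * \<theta>\<bar> ^ n))"
      by (intro summable_mult summable_exp)
    then show ?thesis by (simp add: f_def abs_mult power_abs power_mult_distrib divide_inverse mult_ac)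
  qed
  have "(\<integral>lam. norm (f n lam) \<partial>H) \<le> U powr \<kappa> * (inverse (fact n) * (U * \<bar>\<theta>\<bar>) ^ n)" for n
  proof -
    have "(\<integral>lam. norm (f n lam) \<partial>H) = \<bar>\<theta>\<bar> ^ n / fact n * (\<integral>lam. \<bar>lam powr \<kappa> * lam ^ n\<bar> \<partial>H)"
      by (simp add: f_def abs_mult power_abs)
    also have "\<dots> \<le> \<bar>\<theta>\<bar> ^ n / fact n * (U powr \<kappa> * U ^ n)"
      by (intro mult_left_mono integral_abs_moment_integrand_le) simp
    finally show ?thesis by (simp add: power_mult_distrib divide_inverse mult_ac)
  qed
  then have "summable (\<lambda>n. \<integral>lam. norm (f n lam) \<partial>H)"
    by (intro summable_comparison_test'[OF summable_mult[OF summable_exp]]) auto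
  then have "(\<lambda>n. \<integral>lam. f n lam \<partial>H) sums (\<integral>lam. (\<Sum>n. f n lam) \<partial>H)"
    using f_int norm_summable by (intro sums_integral) auto
  moreover have "(\<integral>lam. f n lam \<partial>H) = moment n * (- \<theta>) ^ n / fact n" for n
    unfolding f_def moment_def by simp
  moreover have "(\<integral>lam. (\<Sum>n. f n lam) \<partial>H) = laplace \<theta>"
    unfolding laplace_def by (rule Bochner_Integration.integral_cong[OF refl sums_unique[OF f_sums, symmetric]])
  ultimately show ?thesis by simp
qed

definition laplace_complex :: "complex \<Rightarrow> complex" where
  "laplace_complex z = (\<Sum>n. of_real (moment n * (- 1) ^ n / fact n) * z ^ n)"

lemma laplace_complex_sums: "(\<lambda>n. of_real (moment n * (- 1) ^ n / fact n) * z ^ n) sums laplace_complex z"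
proof -
  have "norm (of_real (moment n * (- 1) ^ n / fact n) * z ^ n) \<le> U powr \<kappa> * (inverse (fact n) * (U * norm z) ^ n)" for n
  proof -
    have "norm (of_real (moment n * (- 1) ^ n / fact n) * z ^ n) = \<bar>moment n\<bar> / fact n * norm z ^ n"
      by (simp add: norm_mult norm_power norm_divide)
    also have "\<dots> \<le> (U powr \<kappa> * U ^ n) / fact n * norm z ^ n"
      by (intro mult_right_mono divide_right_mono abs_moment_le) auto
    finally show ?thesis by (simp add: power_mult_distrib divide_inverse mult_ac)
  qed
  then have "summable (\<lambda>n. of_real (moment n * (- 1) ^ n / fact n) * z ^ n)"
    by (intro summable_comparison_test'[OF summable_mult[OF summable_exp]]) auto
  then show ?thesis by (simp add: laplace_complex_def sums_iff)
qed

lemma laplace_complex_of_real: "laplace_complex (of_real \<theta>) = of_real (laplace \<theta>)"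
proof -
  have "moment n * (- \<theta>) ^ n / fact n = moment n * (- 1) ^ n / fact n * \<theta> ^ n" for n
    by (subst power_minus) (simp only: mult_ac times_divide_eq_right)
  then have "(\<lambda>n. of_real (moment n * (- 1) ^ n / fact n) * (of_real \<theta>) ^ n) sums (of_real (laplace \<theta>) :: complex)"
    using sums_of_real[OF laplace_sums[of \<theta>]] by (simp only: of_real_mult of_real_power)
  then show ?thesis using laplace_complex_sums sums_unique2 by blast
qed

lemma holomorphic_laplace_complex: "laplace_complex holomorphic_on UNIV"
proof -
  have "laplace_complex field_differentiable at z" for z
  proof -
    have "laplace_complex holomorphic_on ball 0 (norm z + 1)"
      using laplace_complex_sums
      by (intro power_series_holomorphic[where a = "\<lambda>n. of_real (moment n * (- 1) ^ n / fact n)"]) simp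
    then show ?thesis by (rule holomorphic_on_imp_differentiable_at) auto
  qed
  then show ?thesis by (simp add: holomorphic_on_def field_differentiable_at_within)
qed

lemma countable_level_set_laplace: "countable {\<theta>. 0 < \<theta> \<and> \<theta> powr a * exp (- \<theta>) * laplace \<theta> = c}"
proof -
  define h where "h \<theta> = \<theta> powr a * exp (- \<theta>) * laplace \<theta>" for \<theta>
  have h_1: "0 < h 1" unfolding h_def using laplace_pos[of 1] by simp
  have "((\<lambda>\<theta>::real. \<theta> powr a * exp (- \<theta>) * U powr \<kappa>) \<longlongrightarrow> 0) at_top" by real_asymp
  then have "eventually (\<lambda>\<theta>. 0 < \<theta> \<and> \<theta> powr a * exp (- \<theta>) * U powr \<kappa> < h 1) at_top"
    using h_1 by (intro eventually_conj eventually_gt_at_top order_tendstoD(2))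
  then obtain M where M: "0 < M" "M powr a * exp (- M) * U powr \<kappa> < h 1"
    by (auto simp: eventually_at_top_linorder)
  have "h M \<le> M powr a * exp (- M) * U powr \<kappa>"
    unfolding h_def using M by (intro mult_left_mono laplace_le) auto
  with M have "h 1 \<noteq> h M" by simp
  moreover have "(\<lambda>z. z powr of_real a * exp (- z) * laplace_complex z) holomorphic_on {z. 0 < Re z}"
    by (intro holomorphic_intros holomorphic_on_subset[OF holomorphic_laplace_complex])
       (auto simp: complex_nonpos_Reals_iff)
  moreover have "of_real t powr of_real a * exp (- of_real t) * laplace_complex (of_real t) = of_real (h t)"
    if "0 < t" for t
    using that by (simp add: h_def powr_of_real laplace_complex_of_real flip: exp_of_real)
  ultimately show ?thesis
    unfolding h_def[symmetric] using M by (intro countable_level_set_of_holomorphic_extension) auto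
qed

sublocale joint: prob_space "joint_law \<kappa> H"
  by (rule prob_space_joint_law)

lemma borel_measurable_post[measurable]:
  "(\<lambda>z. post \<kappa> H (snd z) (fst z)) \<in> borel_measurable (count_space UNIV \<Otimes>\<^sub>M borel)"
  using measurable_compose_countable'[where I = UNIV and f = "\<lambda>x z. post \<kappa> H (snd z) x"]
  by (auto simp: post_def)

lemma post_eq_laplace:
  assumes "0 < \<theta>"
  shows "post \<kappa> H \<theta> x = \<theta> powr (real x + \<kappa> - 1) * exp (- \<theta>) * laplace \<theta> / (fact x * Gamma \<kappa> * fH \<kappa> H x)"
proof -
  have "\<theta> ^ x * \<theta> powr (\<kappa> - 1) = \<theta> powr (real x + \<kappa> - 1)"
    using assms by (simp add: powr_realpow[symmetric] powr_add[symmetric] add_diff_eq)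
  moreover have "post \<kappa> H \<theta> x = (\<theta> ^ x * \<theta> powr (\<kappa> - 1)) * exp (- \<theta>) * laplace \<theta> / (fact x * Gamma \<kappa> * fH \<kappa> H x)"
    unfolding post_def pois_def gH_eq_laplace by (simp add: field_simps)
  ultimately show ?thesis by simp
qed

lemma post_level_set_null: "{z. post \<kappa> H (snd z) (fst z) = k} \<in> null_sets (joint_law \<kappa> H)"
proof -
  define A where "A = {z. post \<kappa> H (snd z) (fst z) = k}"
  have A: "A \<in> sets (count_space UNIV \<Otimes>\<^sub>M lborel)"
    unfolding A_def by (intro sets_Collect_count_space_lborel) measurable
  have zero: "(\<integral>\<theta>. indicator A (x, \<theta>) * joint_pdf \<kappa> H x \<theta> \<partial>lborel) = 0" for x
  proof (rule integral_eq_zero_AE)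
    define Z where "Z = {\<theta>. 0 < \<theta> \<and> (x, \<theta>) \<in> A}"
    define c where "c = k * (fact x * Gamma \<kappa> * fH \<kappa> H x)"
    have "0 < fact x * Gamma \<kappa> * fH \<kappa> H x" using fH_pos Gamma_real_pos[OF kappa_pos] by simp
    then have "Z \<subseteq> {\<theta>. 0 < \<theta> \<and> \<theta> powr (real x + \<kappa> - 1) * exp (- \<theta>) * laplace \<theta> = c}"
      unfolding Z_def A_def c_def by (auto simp: post_eq_laplace divide_eq_eq)
    then have "countable Z"
      using countable_level_set_laplace by (rule countable_subset)
    then have "AE \<theta> in lborel. \<theta> \<notin> Z"
      by (intro AE_not_in countable_imp_null_set_lborel)
    then show "AE \<theta> in lborel. indicator A (x, \<theta>) * joint_pdf \<kappa> H x \<theta> = 0"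
    proof eventually_elim
      case (elim \<theta>)
      show ?case
      proof (cases "0 < \<theta>")
        case True
        with elim show ?thesis by (simp add: Z_def)
      next
        case False
        then have "joint_pdf \<kappa> H x \<theta> = 0"
          by (cases "\<theta> = 0") (simp_all add: joint_pdf_def gH_eq_laplace)
        then show ?thesis by simp
      qed
    qed
  qed
  have "(\<lambda>x. 0) sums measure (joint_law \<kappa> H) A"
    using joint_law_sums[OF A] unfolding zero .
  then have "measure (joint_law \<kappa> H) A = 0"
    using sums_zero sums_unique2 by blast
  then show ?thesis
    unfolding A_def[symmetric] using A by (simp add: null_sets_def joint.emeasure_eq_measure)
qed

lemma hpd_mass_eq_joint_law: "hpd_mass \<kappa> H k = measure (joint_law \<kappa> H) {z. k \<le> post \<kappa> H (snd z) (fst z)}"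
proof -
  have "hpd_mass \<kappa> H k = (\<Sum>x. \<integral>\<theta>. indicator {z. k \<le> post \<kappa> H (snd z) (fst z)} (x, \<theta>) * joint_pdf \<kappa> H x \<theta> \<partial>lborel)"
    unfolding hpd_mass_def set_lebesgue_integral_def joint_pdf_def
    by (intro suminf_cong Bochner_Integration.integral_cong refl) (auto simp: indicator_def)
  moreover have "{z. k \<le> post \<kappa> H (snd z) (fst z)} \<in> sets (count_space UNIV \<Otimes>\<^sub>M lborel)"
    by (intro sets_Collect_count_space_lborel) measurable
  ultimately show ?thesis
    using sums_unique[OF joint_law_sums] by simp
qed

lemma hpd_mass_0: "hpd_mass \<kappa> H 0 = 1"
proof -
  have "post \<kappa> H \<theta> x \<ge> 0" if "0 \<le> \<theta>" for \<theta> x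
    unfolding post_def using that pois_nonneg gH_nonneg fH_pos[of x] by simp
  then have "hpd_mass \<kappa> H 0 = (\<Sum>x. \<integral>\<theta>. joint_pdf \<kappa> H x \<theta> \<partial>lborel)"
    unfolding hpd_mass_def set_lebesgue_integral_def joint_pdf_def
    by (intro suminf_cong Bochner_Integration.integral_cong refl) (auto simp: indicator_def)
  then show ?thesis using fH_sums by (simp add: integral_joint_pdf sums_iff)
qed

definition posterior_distr :: "real measure" where
  "posterior_distr = distr (joint_law \<kappa> H) borel (\<lambda>z. post \<kappa> H (snd z) (fst z))"

sublocale posterior: real_distribution posterior_distr
  unfolding posterior_distr_def by (intro joint.real_distribution_distr) simp

lemma measure_posterior_distr:
  assumes "B \<in> sets borel"
  shows "measure posterior_distr B = measure (joint_law \<kappa> H) {z. post \<kappa> H (snd z) (fst z) \<in> B}"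
proof -
  have "(\<lambda>z. post \<kappa> H (snd z) (fst z)) \<in> borel_measurable (joint_law \<kappa> H)" by simp
  then show ?thesis
    unfolding posterior_distr_def using assms
    by (simp add: measure_distr joint_law_def space_pair_measure vimage_def)
qed

lemma hpd_mass_eq_cdf: "hpd_mass \<kappa> H k = 1 - cdf posterior_distr k"
proof -
  let ?J = "joint_law \<kappa> H" and ?post = "\<lambda>z. post \<kappa> H (snd z) (fst z)"
  have "{z. k < ?post z} \<in> sets ?J"
    unfolding sets_joint_law by (intro sets_Collect_count_space_lborel) measurable
  have "{z. ?post z \<le> k} \<in> sets ?J"
    unfolding sets_joint_law by (intro sets_Collect_count_space_lborel) measurable
  have "{z. k \<le> ?post z} = {z. k < ?post z} \<union> {z. ?post z = k}" by auto
  then have "hpd_mass \<kappa> H k = measure ?J {z. k < ?post z}"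
    unfolding hpd_mass_eq_joint_law
    using measure_Un_null_set[OF \<open>{z. k < ?post z} \<in> sets ?J\<close> post_level_set_null] by simp
  also have "{z. k < ?post z} = space ?J - {z. ?post z \<le> k}"
    by (auto simp: joint_law_def space_pair_measure)
  also have "measure ?J \<dots> = 1 - measure ?J {z. ?post z \<le> k}"
    using joint.prob_compl[OF \<open>{z. ?post z \<le> k} \<in> sets ?J\<close>] .
  also have "measure ?J {z. ?post z \<le> k} = cdf posterior_distr k"
    unfolding cdf_def using measure_posterior_distr[of "{..k}"] by simp
  finally show ?thesis .
qed

lemma isCont_hpd_mass: "isCont (hpd_mass \<kappa> H) k"
proof -
  have "measure posterior_distr {k} = measure (joint_law \<kappa> H) {z. post \<kappa> H (snd z) (fst z) = k}"
    using measure_posterior_distr[of "{k}"] by simp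
  also have "\<dots> = 0" using post_level_set_null by (simp add: measure_def null_setsD1)
  finally have "isCont (cdf posterior_distr) k" by (simp add: posterior.isCont_cdf)
  then show ?thesis unfolding hpd_mass_eq_cdf[abs_def] by (intro continuous_intros)
qed

lemma hpd_mass_tendsto_0: "(hpd_mass \<kappa> H \<longlongrightarrow> 0) at_top"
  unfolding hpd_mass_eq_cdf[abs_def]
  using tendsto_diff[OF tendsto_const posterior.cdf_lim_at_top_prob, of 1] by simp

lemma hpd_mass_khat:
  assumes "0 < \<beta>" "\<beta> < 1"
  shows "hpd_mass \<kappa> H (khat \<kappa> H \<beta>) = 1 - \<beta>"
  unfolding khat_def
proof (rule Sup_superlevel_set_eq[OF isCont_hpd_mass])
  show "1 - \<beta> \<le> hpd_mass \<kappa> H 0" using assms by (simp add: hpd_mass_0)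
  show "eventually (\<lambda>k. hpd_mass \<kappa> H k < 1 - \<beta>) at_top"
    using assms by (intro order_tendstoD(2)[OF hpd_mass_tendsto_0]) simp
qed

lemma coverage_self:
  assumes "0 < \<beta>" "\<beta> < 1"
  shows "coverage \<kappa> H H \<beta> = 1 - \<beta>"
proof -
  have "coverage \<kappa> H H \<beta> = hpd_mass \<kappa> H (khat \<kappa> H \<beta>)"
    unfolding coverage_def hpd_mass_def set_lebesgue_integral_def
    by (intro suminf_cong Bochner_Integration.integral_cong refl) (auto simp: indicator_def Ihat_def)
  then show ?thesis using hpd_mass_khat[OF assms] by simp
qed

lemma sets_Sigma_Ihat: "(SIGMA x:UNIV. Ihat \<kappa> H \<beta> x) \<in> sets (count_space UNIV \<Otimes>\<^sub>M lborel)"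
proof -
  have "(SIGMA x:UNIV. Ihat \<kappa> H \<beta> x) = {z. 0 \<le> snd z \<and> khat \<kappa> H \<beta> \<le> post \<kappa> H (snd z) (fst z)}"
    by (auto simp: Ihat_def)
  also have "\<dots> \<in> sets (count_space UNIV \<Otimes>\<^sub>M lborel)"
    by (intro sets_Collect_count_space_lborel) measurable
  finally show ?thesis .
qed

lemma coverage_eq_joint_law:
  assumes "(SIGMA x:UNIV. Ihat \<kappa> H' \<beta> x) \<in> sets (count_space UNIV \<Otimes>\<^sub>M lborel)"
  shows "coverage \<kappa> H H' \<beta> = measure (joint_law \<kappa> H) (SIGMA x:UNIV. Ihat \<kappa> H' \<beta> x)"
proof -
  have "coverage \<kappa> H H' \<beta> = (\<Sum>x. \<integral>\<theta>. indicator (SIGMA x:UNIV. Ihat \<kappa> H' \<beta> x) (x, \<theta>) * joint_pdf \<kappa> H x \<theta> \<partial>lborel)"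
    unfolding coverage_def set_lebesgue_integral_def joint_pdf_def
    by (intro suminf_cong Bochner_Integration.integral_cong refl) (auto simp: indicator_def)
  then show ?thesis using joint_law_sums[OF assms] by (simp add: sums_iff)
qed

lemma sample_exp_le_cmult:
  assumes "0 \<le> c" and "\<And>xs. 0 \<le> F xs" and "\<And>xs. F xs \<le> c * G xs" and "\<And>xs. G xs \<le> B"
  shows "sample_exp \<kappa> H n F \<le> c * sample_exp \<kappa> H n G"
  unfolding sample_exp_def using assms fH_pos fH_sums
  by (intro infsum_prod_list_weighted_le) (auto simp: sums_iff less_imp_le)

end

lemma integrable_abs_diff_gH:
  assumes H1: "gamma_mixture \<kappa> L U H1" and H2: "gamma_mixture \<kappa> L U H2"
  shows "integrable lborel (\<lambda>\<theta>. indicator {0..} \<theta> * \<bar>gH \<kappa> H1 \<theta> - gH \<kappa> H2 \<theta>\<bar>)"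
proof -
  have "integrable lborel (\<lambda>\<theta>. \<bar>indicator {0..} \<theta> * gH \<kappa> H1 \<theta> - indicator {0..} \<theta> * gH \<kappa> H2 \<theta>\<bar>)"
    using gamma_mixture.integrable_gH[OF H1] gamma_mixture.integrable_gH[OF H2] by fast
  then show ?thesis
    by (rule Bochner_Integration.integrable_cong[THEN iffD1, rotated -1]) (auto simp: indicator_def)
qed

lemma abs_diff_integral_joint_pdf_le:
  assumes H1: "gamma_mixture \<kappa> L U H1" and H2: "gamma_mixture \<kappa> L U H2"
    and A: "A \<in> sets (count_space UNIV \<Otimes>\<^sub>M lborel)"
  shows "\<bar>(\<integral>\<theta>. indicator A (x, \<theta>) * joint_pdf \<kappa> H1 x \<theta> \<partial>lborel) - (\<integral>\<theta>. indicator A (x, \<theta>) * joint_pdf \<kappa> H2 x \<theta> \<partial>lborel)\<bar>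
       \<le> (\<integral>\<theta>. pois \<theta> x * (indicator {0..} \<theta> * \<bar>gH \<kappa> H1 \<theta> - gH \<kappa> H2 \<theta>\<bar>) \<partial>lborel)"
proof -
  let ?diff = "\<lambda>\<theta>. indicator A (x, \<theta>) * (joint_pdf \<kappa> H1 x \<theta> - joint_pdf \<kappa> H2 x \<theta>)"
  have diff_int: "integrable lborel ?diff"
    using gamma_mixture.integrable_indicator_joint_pdf[OF H1 A] gamma_mixture.integrable_indicator_joint_pdf[OF H2 A]
    by (simp add: right_diff_distrib)
  have "\<bar>?diff \<theta>\<bar> \<le> pois \<theta> x * (indicator {0..} \<theta> * \<bar>gH \<kappa> H1 \<theta> - gH \<kappa> H2 \<theta>\<bar>)" for \<theta>
    by (cases "0 \<le> \<theta>") (auto simp: joint_pdf_def indicator_def abs_mult pois_nonneg right_diff_distrib[symmetric])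
  then have "(\<integral>\<theta>. \<bar>?diff \<theta>\<bar> \<partial>lborel) \<le> (\<integral>\<theta>. pois \<theta> x * (indicator {0..} \<theta> * \<bar>gH \<kappa> H1 \<theta> - gH \<kappa> H2 \<theta>\<bar>) \<partial>lborel)"
    using integrable_abs_diff_gH[OF H1 H2]
    by (intro integral_mono integrable_abs diff_int integrable_pois_times) auto
  moreover have "(\<integral>\<theta>. indicator A (x, \<theta>) * joint_pdf \<kappa> H1 x \<theta> \<partial>lborel) - (\<integral>\<theta>. indicator A (x, \<theta>) * joint_pdf \<kappa> H2 x \<theta> \<partial>lborel)
      = (\<integral>\<theta>. ?diff \<theta> \<partial>lborel)"
    using gamma_mixture.integrable_indicator_joint_pdf[OF H1 A] gamma_mixture.integrable_indicator_joint_pdf[OF H2 A]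
    by (simp add: right_diff_distrib)
  ultimately show ?thesis using integral_abs_bound[of lborel ?diff] by linarith
qed

lemma joint_law_diff_le_TV:
  assumes H1: "gamma_mixture \<kappa> L U H1" and H2: "gamma_mixture \<kappa> L U H2"
    and A: "A \<in> sets (count_space UNIV \<Otimes>\<^sub>M lborel)"
  shows "\<bar>measure (joint_law \<kappa> H1) A - measure (joint_law \<kappa> H2) A\<bar> \<le> 2 * TV (gH \<kappa> H1) (gH \<kappa> H2)"
proof -
  define a where "a x = (\<integral>\<theta>. indicator A (x, \<theta>) * joint_pdf \<kappa> H1 x \<theta> \<partial>lborel)" for x
  define b where "b x = (\<integral>\<theta>. indicator A (x, \<theta>) * joint_pdf \<kappa> H2 x \<theta> \<partial>lborel)" for x
  define d where "d x = (\<integral>\<theta>. pois \<theta> x * (indicator {0..} \<theta> * \<bar>gH \<kappa> H1 \<theta> - gH \<kappa> H2 \<theta>\<bar>) \<partial>lborel)" for x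
  have diff_le: "\<bar>a x - b x\<bar> \<le> d x" for x
    unfolding a_def b_def d_def by (rule abs_diff_integral_joint_pdf_le[OF H1 H2 A])
  have d_sums: "d sums (2 * TV (gH \<kappa> H1) (gH \<kappa> H2))"
    using sums_integral_pois_times[OF integrable_abs_diff_gH[OF H1 H2]]
    by (simp add: d_def[abs_def] TV_def set_lebesgue_integral_def)
  have a_sums: "a sums measure (joint_law \<kappa> H1) A" and b_sums: "b sums measure (joint_law \<kappa> H2) A"
    unfolding a_def[abs_def] b_def[abs_def]
    using gamma_mixture.joint_law_sums[OF H1 A] gamma_mixture.joint_law_sums[OF H2 A] .
  have diff_summable: "summable (\<lambda>x. \<bar>a x - b x\<bar>)"
    using diff_le by (intro summable_comparison_test'[OF sums_summable[OF d_sums]]) auto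
  have "\<bar>measure (joint_law \<kappa> H1) A - measure (joint_law \<kappa> H2) A\<bar> = \<bar>\<Sum>x. a x - b x\<bar>"
    using sums_unique[OF sums_diff[OF a_sums b_sums]] by simp
  also have "\<dots> \<le> (\<Sum>x. \<bar>a x - b x\<bar>)"
    by (rule summable_rabs[OF diff_summable])
  also have "\<dots> \<le> (\<Sum>x. d x)"
    by (rule suminf_le[OF diff_le diff_summable sums_summable[OF d_sums]])
  also have "\<dots> = 2 * TV (gH \<kappa> H1) (gH \<kappa> H2)"
    using d_sums by (simp add: sums_iff)
  finally show ?thesis .
qed

lemma TV_gH_le_1:
  assumes H1: "gamma_mixture \<kappa> L U H1" and H2: "gamma_mixture \<kappa> L U H2"
  shows "TV (gH \<kappa> H1) (gH \<kappa> H2) \<le> 1"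
proof -
  interpret H1: gamma_mixture \<kappa> L U H1 by (rule H1)
  interpret H2: gamma_mixture \<kappa> L U H2 by (rule H2)
  have "(\<integral>\<theta>. indicator {0..} \<theta> * \<bar>gH \<kappa> H1 \<theta> - gH \<kappa> H2 \<theta>\<bar> \<partial>lborel)
      \<le> (\<integral>\<theta>. indicator {0..} \<theta> * gH \<kappa> H1 \<theta> + indicator {0..} \<theta> * gH \<kappa> H2 \<theta> \<partial>lborel)"
  proof (rule integral_mono[OF integrable_abs_diff_gH[OF H1 H2]])
    show "integrable lborel (\<lambda>\<theta>. indicator {0..} \<theta> * gH \<kappa> H1 \<theta> + indicator {0..} \<theta> * gH \<kappa> H2 \<theta>)"
      by (intro Bochner_Integration.integrable_add H1.integrable_gH H2.integrable_gH)
    show "indicator {0..} \<theta> * \<bar>gH \<kappa> H1 \<theta> - gH \<kappa> H2 \<theta>\<bar>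
        \<le> indicator {0..} \<theta> * gH \<kappa> H1 \<theta> + indicator {0..} \<theta> * gH \<kappa> H2 \<theta>" for \<theta>
      using H1.gH_nonneg[of \<theta>] H2.gH_nonneg[of \<theta>] by (auto simp: indicator_def)
  qed
  also have "\<dots> = 2"
    using Bochner_Integration.integral_add[OF H1.integrable_gH H2.integrable_gH] H1.integral_gH H2.integral_gH
    by simp
  finally show ?thesis by (simp add: TV_def set_lebesgue_integral_def)
qed

lemma coverage_error_le_TV:
  assumes H: "gamma_mixture \<kappa> L U H" and Hs: "gamma_mixture \<kappa> L U Hs" and "0 < \<beta>" "\<beta> < 1"
  shows "\<bar>coverage \<kappa> Hs H \<beta> - (1 - \<beta>)\<bar> \<le> 2 * TV (gH \<kappa> H) (gH \<kappa> Hs)"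
proof -
  interpret H: gamma_mixture \<kappa> L U H by (rule H)
  interpret Hs: gamma_mixture \<kappa> L U Hs by (rule Hs)
  let ?A = "SIGMA x:UNIV. Ihat \<kappa> H \<beta> x"
  have "1 - \<beta> = measure (joint_law \<kappa> H) ?A"
    using H.coverage_self[OF assms(3,4)] H.coverage_eq_joint_law[OF H.sets_Sigma_Ihat] by simp
  moreover have "coverage \<kappa> Hs H \<beta> = measure (joint_law \<kappa> Hs) ?A"
    by (rule Hs.coverage_eq_joint_law[OF H.sets_Sigma_Ihat])
  ultimately show ?thesis
    using joint_law_diff_le_TV[OF H Hs H.sets_Sigma_Ihat] by (simp add: abs_minus_commute)
qed

theorem theorem4p2:
  fixes \<kappa> L U \<alpha> :: real
  assumes "\<kappa> > 0" and "0 < L" and "L < U"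
    and "0 < \<alpha>" and "\<alpha> < 1/2"
    and TVrate: "\<exists>C>0. \<forall>Hhat Hs n. is_npmle \<kappa> L U Hhat \<and> Hs \<in> probs_on L U \<and> n \<ge> 2 \<longrightarrow>
        sample_exp \<kappa> Hs n (\<lambda>xs. TV (gH \<kappa> (Hhat xs)) (gH \<kappa> Hs)) \<le> C * rate \<kappa> \<alpha> n"
  shows "\<exists>C'>0. \<forall>Hhat Hs n \<beta>. is_npmle \<kappa> L U Hhat \<and> Hs \<in> probs_on L U \<and> n \<ge> 2
        \<and> 0 < \<beta> \<and> \<beta> < 1 \<longrightarrow>
        sample_exp \<kappa> Hs n (\<lambda>xs. \<bar>coverage \<kappa> Hs (Hhat xs) \<beta> - (1 - \<beta>)\<bar>) \<le> C' * rate \<kappa> \<alpha> n"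
proof -
  obtain C where "C > 0" and C: "\<And>Hhat Hs n. is_npmle \<kappa> L U Hhat \<Longrightarrow> Hs \<in> probs_on L U \<Longrightarrow> n \<ge> 2 \<Longrightarrow>
      sample_exp \<kappa> Hs n (\<lambda>xs. TV (gH \<kappa> (Hhat xs)) (gH \<kappa> Hs)) \<le> C * rate \<kappa> \<alpha> n"
    using TVrate by blast
  have "sample_exp \<kappa> Hs n (\<lambda>xs. \<bar>coverage \<kappa> Hs (Hhat xs) \<beta> - (1 - \<beta>)\<bar>) \<le> 2 * C * rate \<kappa> \<alpha> n"
    if npmle: "is_npmle \<kappa> L U Hhat" and Hs: "Hs \<in> probs_on L U" and "n \<ge> 2" "0 < \<beta>" "\<beta> < 1"
    for Hhat Hs n \<beta>
  proof -
    have Hs_mix: "gamma_mixture \<kappa> L U Hs" and Hhat_mix: "gamma_mixture \<kappa> L U (Hhat xs)" for xs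
      using assms npmle Hs by (simp_all add: gamma_mixture_def is_npmle_def)
    have "sample_exp \<kappa> Hs n (\<lambda>xs. \<bar>coverage \<kappa> Hs (Hhat xs) \<beta> - (1 - \<beta>)\<bar>)
        \<le> 2 * sample_exp \<kappa> Hs n (\<lambda>xs. TV (gH \<kappa> (Hhat xs)) (gH \<kappa> Hs))"
      using coverage_error_le_TV[OF Hhat_mix Hs_mix] TV_gH_le_1[OF Hhat_mix Hs_mix] that
      by (intro gamma_mixture.sample_exp_le_cmult[OF Hs_mix]) auto
    also have "\<dots> \<le> 2 * C * rate \<kappa> \<alpha> n"
      using C[OF that(1-3)] by simp
    finally show ?thesis .
  qed
  then show ?thesis using \<open>C > 0\<close> by (intro exI[of _ "2 * C"]) auto
qed

end
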